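(* Consider the house allocation model with dichotomous preferences as described in the context, satisfying $\Gamma(I,O)=O$ and $|\{i\in I:C_i\cap O'\ne\emptyset\}|>|O'|$ for every nonempty proper subset $O'\subsetneq O$. Let $X^*_1,\dots,X^*_m$ be the sequence of bottleneck sets with associated $P_0,\dots,P_{m-1}$. Then for every FTTC mechanism satisfying stepwise equal-endowment equal treatment, the output assignment $p$ is an egalitarian solution: for every $k=1,\dots,m$ and every $i\in X^*_k$, $$\sum_{o\in C_i}p_{i,o}=\frac{|\Gamma(X^*_k,P_{k-1})|}{|X^*_k|}.$$
   Context: Fractional endowment exchange (FEE) problem: a tuple $(I,O,\succsim_I,\omega)$ where $I$ is a finite set of agents, $O$ a finite set of objects, each agent $i$ has a complete and transitive (possibly non-strict) preference relation $\succsim_i$ over $O$ with asymmetric part $\succ_i$ and symmetric part $\sim_i$, and $\omega=(\omega_{i,o})_{i\in I,o\in O}$ is an endowment matrix with $\omega_{i,o}\in[0,1]$, $\sum_{o\in O}\omega_{i,o}\le 1$ for each $i$, and $q_o=\sum_{i\in I}\omega_{i,o}$ an integer for each $o$. An assignment is a nonnegative matrix $p=(p_{i,o})$ with $\sum_i p_{i,o}\le q_o$ for all $o$ and $\sum_o p_{i,o}\le 1$ for all $i$; $\omega_i=(\omega_{i,o})_{o\in O}$. House allocation model: $|O|=|I|$ and $\omega_{i,o}=1/|I|$ for all $i,o$. Dichotomous preferences: each agent $i$ has a set $C_i\subseteq O$ of acceptable objects, with $o\sim_i o'$ whenever $o,o'\in C_i$ or $o,o'\notin C_i$, and $o\succ_i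 o'$ whenever $o\in C_i$, $o'\notin C_i$. For nonempty $Y\subseteq I$ and $O'\subseteq O$, $\Gamma(Y,O')=(\bigcup_{i\in Y}C_i)\cap O'$. Bottleneck sets: set $Z_0=I$, $P_0=O$. For $k\ge1$ while $Z_{k-1}\ne\emptyset$, let $X^*_k$ be the largest-cardinality minimizer over nonempty $Y\subseteq Z_{k-1}$ of $|\Gamma(Y,P_{k-1})|/|Y|$ (the union of minimizers is a minimizer, so it is unique), and set $Z_k=Z_{k-1}\setminus X^*_k$, $P_k=P_{k-1}\setminus\Gamma(X^*_k,P_{k-1})$. Let $m$ be the index with $Z_m=\emptyset$. FTTC (Fractional Top Trading Cycle) on the full preference domain. Initialize $\omega(0)=\omega$, $p(0)=0$, $O(0)=O$. At step $d\ge1$ (with $O(d-1)\ne\emptyset$): (i) Labeling. Put $T_0=O(d-1)$. For $k=1,2,\dots$: let $L_k$ be the set of agents $i\notin L_1\cup\dots\cup L_{k-1}$ for which there exist $o\in T_{k-1}$ and $o'\in O\setminus(T_0\cup\dots\cup T_{k-1})$ with $p_{i,o'}(d-1)>0$ and $o\sim_i o'$; for $i\in L_k$ let $\tilde O_i(d-1)$ be the set of all such $o'$ for this $i$, and let $T_k=\bigcup_{i\in L_k}\tilde O_i(d-1)$. Stop at the first $k$ with $L_k=\emptyset$. Set $L(d-1)=\bigcup_k L_k$, $\tilde O(d-1)=\bigcup_{k\ge1}T_k$, $\overline{O}(d-1)=O(d-1)\cup\tilde O(d-1)$, and $\tilde O_i(d-1)=\emptyset$ for $i\notin L(d-1)$.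 (ii) Pointing. The active agents are $I(d-1)=L(d-1)\cup\{i\in I:\sum_o\omega_{i,o}(d-1)>0\}$. For $i\in I(d-1)$ let $B_i$ be the set of $\succsim_i$-maximal elements of $\overline{O}(d-1)$, let $k_i$ be the least $k\ge0$ with $B_i\cap T_k\ne\emptyset$, and let $A_i(d)=B_i\cap T_{k_i}$. (iii) Trading. The mechanism chooses (possibly depending on the history): a ratio matrix $\lambda(d)=(\lambda_{i,o}(d))_{i\in I(d-1),o\in\overline{O}(d-1)}$, nonnegative, with $\sum_{i\in I(d-1)}\lambda_{i,o}(d)=1$ for each $o\in\overline O(d-1)$, $\lambda_{i,o}(d)>0$ only if $\omega_{i,o}(d-1)>0$ (for $o\in O(d-1)$) and only if $o\in\tilde O_i(d-1)$ (for $o\in\tilde O(d-1)$); a quota matrix $\beta(d)$ on $I(d-1)\times O(d-1)$ with $0\le\beta_{i,o}(d)\le\omega_{i,o}(d-1)$; a division matrix $\gamma(d)$ on $I(d-1)\times\overline O(d-1)$, nonnegative, with $\sum_o\gamma_{i,o}(d)=1$ and $\gamma_{i,o}(d)>0$ only if $o\in A_i(d)$. Let $x^*(d)=(x^*_a(d))_{a\in I(d-1)\cup\overline O(d-1)}$ be the maximum (componentwise largest) nonnegative solution of $x_o=\sum_{i\in I(d-1)}\gamma_{i,o}(d)x_i$ for all $o\in\overline O(d-1)$ and $x_i=\sum_{o\in\overline O(d-1)}\lambda_{i,o}(d)x_o$ for all $i\in I(d-1)$, subject to $\lambda_{i,o}(d)x_o\le\beta_{i,o}(d)$ for $o\in O(d-1)$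 and $\lambda_{i,o}(d)x_o\le p_{i,o}(d-1)$ for $o\in\tilde O(d-1)$. For $i\in I(d-1)$: $\omega_{i,o}(d)=\omega_{i,o}(d-1)-\lambda_{i,o}(d)x^*_o(d)$ if $o\in O(d-1)$ and $0$ otherwise; $p_{i,o}(d)=p_{i,o}(d-1)-\mathbf 1[o\in\tilde O_i(d-1)]\lambda_{i,o}(d)x^*_o(d)+\gamma_{i,o}(d)x^*_i(d)$ (with $\gamma_{i,o}(d)=0$ for $o\notin\overline O(d-1)$). For $i\notin I(d-1)$, $\omega_i(d)=\omega_i(d-1)$, $p_i(d)=p_i(d-1)$. Let $O(d)=\{o\in O(d-1):\sum_i\omega_{i,o}(d)>0\}$. If $O(d)=\emptyset$ stop and output $p(d)$; otherwise go to step $d+1$. (Standing assumption: the maximum solution exists at each step and the procedure ends after finitely many steps.) An FTTC mechanism is specified by a rule choosing $\lambda(d),\beta(d),\gamma(d)$ at every step. Stepwise equal-endowment equal treatment (stepwise EEET): at every step $d$, for all $i,j\in I(d-1)$, if $\omega_i(d-1)=\omega_j(d-1)$ then $\lambda_{i,o}(d)=\lambda_{j,o}(d)$ for all $o\in O(d-1)$. *)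

theory Defs
  imports Main "HOL.Real"
begin

(* A preference profile R: R i a b  means  a \<succeq>_i b. *)
definition indiff :: "('i \<Rightarrow> 'o \<Rightarrow> 'o \<Rightarrow> bool) \<Rightarrow> 'i \<Rightarrow> 'o \<Rightarrow> 'o \<Rightarrow> bool" where
  "indiff R i a b \<longleftrightarrow> R i a b \<and> R i b a"

definition dich_pref :: "('i \<Rightarrow> 'o set) \<Rightarrow> 'i \<Rightarrow> 'o \<Rightarrow> 'o \<Rightarrow> bool" where
  "dich_pref C i a b \<longleftrightarrow> (a \<in> C i \<or> b \<notin> C i)"

definition Ocur :: "'i set \<Rightarrow> 'o set \<Rightarrow> ('i \<Rightarrow> 'o \<Rightarrow> real) \<Rightarrow> 'o set" where
  "Ocur I Os \<omega> = {b \<in> Os. (\<Sum>i\<in>I. \<omega> i b) > 0}"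

(* Labeling. lab ... k = (L_1 \<union>..\<union> L_k, T_0 \<union>..\<union> T_k, L_k, T_k, (\<lambda>i. tilde O_i if i \<in> L_k else {})) *)
fun lab :: "'i set \<Rightarrow> 'o set \<Rightarrow> ('i \<Rightarrow> 'o \<Rightarrow> 'o \<Rightarrow> bool) \<Rightarrow> ('i \<Rightarrow> 'o \<Rightarrow> real) \<Rightarrow> 'o set \<Rightarrow> nat
            \<Rightarrow> 'i set \<times> 'o set \<times> 'i set \<times> 'o set \<times> ('i \<Rightarrow> 'o set)" where
  "lab I Os R p T0 0 = ({}, T0, {}, T0, (\<lambda>i. {}))"
| "lab I Os R p T0 (Suc k) =
     (case lab I Os R p T0 k of (Lc, Tc, _, Tl, _) \<Rightarrow>
       (let Ot = (\<lambda>i. {b' \<in> Os - Tc. p i b' > 0 \<and> (\<exists>b\<in>Tl. indiff R i b b')});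
            Ln = {i \<in> I - Lc. Ot i \<noteq> {}};
            Otn = (\<lambda>i. if i \<in> Ln then Ot i else {});
            Tn = \<Union> (Otn ` Ln)
        in (Lc \<union> Ln, Tc \<union> Tn, Ln, Tn, Otn)))"

definition labL where
  "labL I Os R \<omega> p k = fst (snd (snd (lab I Os R p (Ocur I Os \<omega>) k)))"
definition labT where
  "labT I Os R \<omega> p k = fst (snd (snd (snd (lab I Os R p (Ocur I Os \<omega>) k))))"
definition labOt where
  "labOt I Os R \<omega> p k = snd (snd (snd (snd (lab I Os R p (Ocur I Os \<omega>) k))))"

definition Lall where
  "Lall I Os R \<omega> p = (\<Union>k. labL I Os R \<omega> p k)"
definition Otil where
  "Otil I Os R \<omega> p = (\<Union>k\<in>{1..}. labT I Os R \<omega> p k)"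
(* tilde O_i(d-1) (empty for i not in L(d-1)) *)
definition Otil_i where
  "Otil_i I Os R \<omega> p i = (\<Union>k. labOt I Os R \<omega> p k i)"
definition Obar where
  "Obar I Os R \<omega> p = Ocur I Os \<omega> \<union> Otil I Os R \<omega> p"

definition Iact where
  "Iact I Os R \<omega> p = Lall I Os R \<omega> p \<union> {i \<in> I. (\<Sum>b\<in>Os. \<omega> i b) > 0}"

definition Bset where
  "Bset I Os R \<omega> p i = {b \<in> Obar I Os R \<omega> p. \<forall>b'\<in>Obar I Os R \<omega> p. R i b b'}"
definition kidx where
  "kidx I Os R \<omega> p i = (LEAST k. Bset I Os R \<omega> p i \<inter> labT I Os R \<omega> p k \<noteq> {})"
definition Aset where
  "Aset I Os R \<omega> p i = Bset I Os R \<omega> p i \<inter> labT I Os R \<omega> p (kidx I Os R \<omega> p i)"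

definition fttc_sol where
  "fttc_sol I Os R \<omega> p lam beta gam xi xo \<longleftrightarrow>
     (let Ia = Iact I Os R \<omega> p; Ob = Obar I Os R \<omega> p; T0 = Ocur I Os \<omega>; Tt = Otil I Os R \<omega> p in
      (\<forall>i\<in>Ia. xi i \<ge> 0) \<and> (\<forall>b\<in>Ob. xo b \<ge> 0) \<and>
      (\<forall>b\<in>Ob. xo b = (\<Sum>i\<in>Ia. gam i b * xi i)) \<and>
      (\<forall>i\<in>Ia. xi i = (\<Sum>b\<in>Ob. lam i b * xo b)) \<and>
      (\<forall>i\<in>Ia. \<forall>b\<in>T0. lam i b * xo b \<le> beta i b) \<and>
      (\<forall>i\<in>Ia. \<forall>b\<in>Tt. lam i b * xo b \<le> p i b))"

definition fttc_maxsol where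
  "fttc_maxsol I Os R \<omega> p lam beta gam xi xo \<longleftrightarrow>
     fttc_sol I Os R \<omega> p lam beta gam xi xo \<and>
     (\<forall>yi yo. fttc_sol I Os R \<omega> p lam beta gam yi yo \<longrightarrow>
        (\<forall>i\<in>Iact I Os R \<omega> p. yi i \<le> xi i) \<and> (\<forall>b\<in>Obar I Os R \<omega> p. yo b \<le> xo b))"

(* One FTTC step d: from (\<omega>(d-1), p(d-1)) with choices \<lambda>(d), \<beta>(d), \<gamma>(d) to (\<omega>(d), p(d)).
   Matrices are compared on I \<times> Os only. *)
definition fttc_step where
  "fttc_step I Os R \<omega> p lam beta gam \<omega>' p' \<longleftrightarrow>
     (let Ia = Iact I Os R \<omega> p; Ob = Obar I Os R \<omega> p; T0 = Ocur I Os \<omega>; Tt = Otil I Os R \<omega> p in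
      T0 \<noteq> {} \<and>
      (\<forall>i\<in>Ia. \<forall>b\<in>Ob. lam i b \<ge> 0) \<and>
      (\<forall>b\<in>Ob. (\<Sum>i\<in>Ia. lam i b) = 1) \<and>
      (\<forall>i\<in>Ia. \<forall>b\<in>T0. lam i b > 0 \<longrightarrow> \<omega> i b > 0) \<and>
      (\<forall>i\<in>Ia. \<forall>b\<in>Tt. lam i b > 0 \<longrightarrow> b \<in> Otil_i I Os R \<omega> p i) \<and>
      (\<forall>i\<in>Ia. \<forall>b\<in>T0. 0 \<le> beta i b \<and> beta i b \<le> \<omega> i b) \<and>
      (\<forall>i\<in>Ia. (\<forall>b\<in>Ob. gam i b \<ge> 0) \<and> (\<Sum>b\<in>Ob. gam i b) = 1 \<and>
                 (\<forall>b\<in>Ob. gam i b > 0 \<longrightarrow> b \<in> Aset I Os R \<omega> p i)) \<and>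
      (\<exists>xi xo. fttc_maxsol I Os R \<omega> p lam beta gam xi xo \<and>
         (\<forall>i\<in>I. \<forall>b\<in>Os. \<omega>' i b =
             (if i \<in> Ia then (if b \<in> T0 then \<omega> i b - lam i b * xo b else 0) else \<omega> i b)) \<and>
         (\<forall>i\<in>I. \<forall>b\<in>Os. p' i b =
             (if i \<in> Ia then p i b
                 - (if b \<in> Otil_i I Os R \<omega> p i then lam i b * xo b else 0)
                 + (if b \<in> Ob then gam i b * xi i else 0)
              else p i b))))"

(* A complete (terminating) run of an FTTC mechanism with D steps: ws d = \<omega>(d), ps d = p(d),
   lams d, betas d, gams d = \<lambda>(d), \<beta>(d), \<gamma>(d). The output is ps D. *)
definition fttc_run where
  "fttc_run I Os R \<omega>0 D ws ps lams betas gams \<longleftrightarrow>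
     (\<forall>i\<in>I. \<forall>b\<in>Os. ws 0 i b = \<omega>0 i b \<and> ps 0 i b = 0) \<and>
     (\<forall>d\<in>{1..D}. fttc_step I Os R (ws (d-1)) (ps (d-1)) (lams d) (betas d) (gams d) (ws d) (ps d)) \<and>
     Ocur I Os (ws D) = {}"

definition stepwise_EEET where
  "stepwise_EEET I Os R D ws ps lams \<longleftrightarrow>
     (\<forall>d\<in>{1..D}. \<forall>i\<in>Iact I Os R (ws (d-1)) (ps (d-1)). \<forall>j\<in>Iact I Os R (ws (d-1)) (ps (d-1)).
        (\<forall>b\<in>Os. ws (d-1) i b = ws (d-1) j b) \<longrightarrow>
        (\<forall>b\<in>Ocur I Os (ws (d-1)). lams d i b = lams d j b))"

definition Gam :: "('i \<Rightarrow> 'o set) \<Rightarrow> 'i set \<Rightarrow> 'o set \<Rightarrow> 'o set" where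
  "Gam C Y Os' = (\<Union>i\<in>Y. C i) \<inter> Os'"

definition ratio :: "('i \<Rightarrow> 'o set) \<Rightarrow> 'i set \<Rightarrow> 'o set \<Rightarrow> real" where
  "ratio C Y P = real (card (Gam C Y P)) / real (card Y)"

definition is_bneck :: "('i \<Rightarrow> 'o set) \<Rightarrow> 'i set \<Rightarrow> 'o set \<Rightarrow> 'i set \<Rightarrow> bool" where
  "is_bneck C Z P X \<longleftrightarrow> X \<subseteq> Z \<and> X \<noteq> {} \<and>
     (\<forall>Y. Y \<subseteq> Z \<and> Y \<noteq> {} \<longrightarrow> ratio C X P \<le> ratio C Y P) \<and>
     (\<forall>Y. Y \<subseteq> Z \<and> Y \<noteq> {} \<and> ratio C Y P = ratio C X P \<longrightarrow> card Y \<le> card X)"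

(* bseq k = (Z_k, P_k) *)
fun bseq :: "('i \<Rightarrow> 'o set) \<Rightarrow> 'i set \<Rightarrow> 'o set \<Rightarrow> nat \<Rightarrow> 'i set \<times> 'o set" where
  "bseq C I Os 0 = (I, Os)"
| "bseq C I Os (Suc k) = (case bseq C I Os k of (Z, P) \<Rightarrow>
      (let X = (THE X. is_bneck C Z P X) in (Z - X, P - Gam C X P)))"

(* X^*_k for k \<ge> 1 *)
definition bX :: "('i \<Rightarrow> 'o set) \<Rightarrow> 'i set \<Rightarrow> 'o set \<Rightarrow> nat \<Rightarrow> 'i set" where
  "bX C I Os k = (THE X. is_bneck C (fst (bseq C I Os (k-1))) (snd (bseq C I Os (k-1))) X)"

definition bm :: "('i \<Rightarrow> 'o set) \<Rightarrow> 'i set \<Rightarrow> 'o set \<Rightarrow> nat" where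
  "bm C I Os = (LEAST m. fst (bseq C I Os m) = {})"

end

theory Submission
  imports Defs
begin

text \<open>Under the strict surplus condition every nonempty group \<open>Y\<close> of agents finds at least \<open>|Y|\<close>
  acceptable objects, while all agents together find exactly \<open>|O| = |I|\<close>; hence \<open>I\<close> is the only
  bottleneck set, with ratio 1, and the claim is that FTTC gives every agent one full unit of acceptable
  objects. Along the run, endowments stay identical across agents (stepwise EEET), assignments contain
  only acceptable objects, and every row and every column of \<open>\<omega> + p\<close> sums to 1. Trading preserves
  the sums, and agents receive only acceptable objects as long as each agent finds an acceptable object
  in \<open>Obar\<close>. If some agent did not, the agents \<open>J\<close> without acceptable objects in \<open>Obar\<close> would
  hold everything outside \<open>Obar\<close>, each less than one unit since their endowments are still positive,
  whereas the surplus condition applied to \<open>Obar\<close> gives \<open>|O - Obar| \<ge> |J|\<close>. When the run stops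
  no endowment is left, so each agent holds one unit of acceptable objects.\<close>

lemma indiff_dich_pref: "indiff (dich_pref C) i a b \<longleftrightarrow> (a \<in> C i \<longleftrightarrow> b \<in> C i)"
  unfolding indiff_def dich_pref_def by blast

definition "lab_agents_upto I Os R p T0 k = fst (lab I Os R p T0 k)"
definition "lab_objects_upto I Os R p T0 k = fst (snd (lab I Os R p T0 k))"
definition "lab_agents I Os R p T0 k = fst (snd (snd (lab I Os R p T0 k)))"
definition "lab_objects I Os R p T0 k = fst (snd (snd (snd (lab I Os R p T0 k))))"
definition "lab_offers I Os R p T0 k = snd (snd (snd (snd (lab I Os R p T0 k))))"
definition "lab_candidates I Os R p T0 k i =
  {b' \<in> Os - lab_objects_upto I Os R p T0 k. p i b' > 0 \<and> (\<exists>b\<in>lab_objects I Os R p T0 k. indiff R i b b')}"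

lemma lab_0 [simp]:
  "lab_agents_upto I Os R p T0 0 = {}" "lab_objects_upto I Os R p T0 0 = T0"
  "lab_agents I Os R p T0 0 = {}" "lab_objects I Os R p T0 0 = T0" "lab_offers I Os R p T0 0 i = {}"
  by (simp_all add: lab_agents_upto_def lab_objects_upto_def lab_agents_def lab_objects_def lab_offers_def)

lemma lab_Suc:
  "lab_agents I Os R p T0 (Suc k) = {i \<in> I - lab_agents_upto I Os R p T0 k. lab_candidates I Os R p T0 k i \<noteq> {}}"
  "lab_agents_upto I Os R p T0 (Suc k) = lab_agents_upto I Os R p T0 k \<union> lab_agents I Os R p T0 (Suc k)"
  "lab_offers I Os R p T0 (Suc k) i =
     (if i \<in> lab_agents I Os R p T0 (Suc k) then lab_candidates I Os R p T0 k i else {})"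
  "lab_objects I Os R p T0 (Suc k) = (\<Union>j\<in>lab_agents I Os R p T0 (Suc k). lab_candidates I Os R p T0 k j)"
  "lab_objects_upto I Os R p T0 (Suc k) = lab_objects_upto I Os R p T0 k \<union> lab_objects I Os R p T0 (Suc k)"
  unfolding lab_agents_upto_def lab_objects_upto_def lab_agents_def lab_objects_def lab_offers_def
    lab_candidates_def
  by (cases "lab I Os R p T0 k"; force simp: Let_def)+

lemma lab_objects_upto_bounds:
  "T0 \<subseteq> lab_objects_upto I Os R p T0 k"
  "lab_objects_upto I Os R p T0 k \<subseteq> T0 \<union> (\<Union>k'\<in>{1..}. lab_objects I Os R p T0 k')"
proof (induction k)
  case (Suc k)
  have "lab_objects I Os R p T0 (Suc k) \<subseteq> (\<Union>k'\<in>{1..}. lab_objects I Os R p T0 k')" by force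
  with Suc show "T0 \<subseteq> lab_objects_upto I Os R p T0 (Suc k)"
    "lab_objects_upto I Os R p T0 (Suc k) \<subseteq> T0 \<union> (\<Union>k'\<in>{1..}. lab_objects I Os R p T0 k')"
    by (auto simp: lab_Suc(5))
qed simp_all

lemma lab_agents_subset: "lab_agents I Os R p T0 k \<subseteq> I"
  by (cases k) (auto simp: lab_Suc)

lemma lab_offers_subset: "lab_offers I Os R p T0 k i \<subseteq> lab_objects I Os R p T0 k"
  by (cases k) (auto simp: lab_Suc)

lemma lab_objects_Suc_fresh: "lab_objects I Os R p T0 (Suc k) \<subseteq> Os - lab_objects_upto I Os R p T0 k"
  by (auto simp: lab_Suc lab_candidates_def)

lemma lab_objects_Suc_disjoint: "lab_objects I Os R p T0 (Suc k) \<inter> T0 = {}"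
  using lab_objects_upto_bounds(1)[of T0 I Os R p k] lab_objects_Suc_fresh[of I Os R p T0 k] by blast

lemma labL_eq: "labL I Os R w p k = lab_agents I Os R p (Ocur I Os w) k"
  by (simp add: labL_def lab_agents_def)

lemma labT_eq: "labT I Os R w p k = lab_objects I Os R p (Ocur I Os w) k"
  by (simp add: labT_def lab_objects_def)

lemma labOt_eq: "labOt I Os R w p k = lab_offers I Os R p (Ocur I Os w) k"
  by (simp add: labOt_def lab_offers_def)

lemma Ocur_subset: "Ocur I Os w \<subseteq> Os"
  by (auto simp: Ocur_def)

lemma Otil_subset: "Otil I Os R w p \<subseteq> Os"
  using lab_objects_Suc_fresh[of I Os R p "Ocur I Os w"]
  by (force simp: Otil_def labT_eq Suc_le_eq gr0_conv_Suc)

lemma Otil_Ocur_disjoint: "Otil I Os R w p \<inter> Ocur I Os w = {}"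
  using lab_objects_Suc_disjoint[of I Os R p "Ocur I Os w"]
  by (force simp: Otil_def labT_eq Suc_le_eq gr0_conv_Suc)

lemma Otil_i_subset: "Otil_i I Os R w p i \<subseteq> Otil I Os R w p"
proof -
  have "lab_offers I Os R p (Ocur I Os w) k i \<subseteq> (\<Union>k'\<in>{1..}. lab_objects I Os R p (Ocur I Os w) k')" for k
    using lab_offers_subset[of I Os R p "Ocur I Os w" k i] by (cases k) force+
  then show ?thesis
    unfolding Otil_i_def Otil_def labOt_eq labT_eq by blast
qed

lemma Lall_subset: "Lall I Os R w p \<subseteq> I"
  using lab_agents_subset by (fastforce simp: Lall_def labL_eq)

lemma Obar_subset: "Obar I Os R w p \<subseteq> Os"
  using Otil_subset[of I Os R w p] Ocur_subset[of I Os w] by (auto simp: Obar_def)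

lemma lab_objects_upto_Obar: "lab_objects_upto I Os R p (Ocur I Os w) k \<subseteq> Obar I Os R w p"
  using lab_objects_upto_bounds(2)[of I Os R p "Ocur I Os w" k] by (auto simp: Obar_def Otil_def labT_eq)

lemma Obar_lab_objects: "b \<in> Obar I Os R w p \<Longrightarrow> \<exists>k. b \<in> lab_objects I Os R p (Ocur I Os w) k"
  unfolding Obar_def Otil_def labT_eq by (metis UN_E UnE lab_0(4))

text \<open>With dichotomous preferences all acceptable objects are indifferent, so an agent holding only
  acceptable objects has all of its holdings labelled in the round in which it is labelled.\<close>

lemma dich_lab_holdings_labelled:
  assumes hold: "\<forall>j\<in>I. \<forall>b\<in>Os. p j b > 0 \<longrightarrow> b \<in> C j"
    and j: "j \<in> lab_agents_upto I Os (dich_pref C) p T0 k" and b: "b \<in> Os" "p j b > 0"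
  shows "b \<in> lab_objects_upto I Os (dich_pref C) p T0 k"
  using j
proof (induction k)
  case (Suc k)
  let ?R = "dich_pref C"
  show ?case
  proof (cases "j \<in> lab_agents_upto I Os ?R p T0 k")
    case True
    then show ?thesis using Suc.IH by (auto simp: lab_Suc(5))
  next
    case False
    then have new: "j \<in> lab_agents I Os ?R p T0 (Suc k)" using Suc.prems by (simp add: lab_Suc(2))
    then have "j \<in> I" and "lab_candidates I Os ?R p T0 k j \<noteq> {}" by (auto simp: lab_Suc(1))
    then obtain b0 b' where "b0 \<in> lab_objects I Os ?R p T0 k" "b' \<in> Os" "p j b' > 0" "indiff ?R j b0 b'"
      by (auto simp: lab_candidates_def)
    with hold \<open>j \<in> I\<close> have "b0 \<in> C j" by (auto simp: indiff_dich_pref)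
    moreover have "b \<in> C j" using hold \<open>j \<in> I\<close> b by blast
    ultimately have "b \<in> lab_objects_upto I Os ?R p T0 k \<or> b \<in> lab_candidates I Os ?R p T0 k j"
      using b \<open>b0 \<in> lab_objects I Os ?R p T0 k\<close> by (auto simp: lab_candidates_def indiff_dich_pref)
    then show ?thesis using new by (auto simp: lab_Suc(4,5))
  qed
qed simp

lemma dich_lab_holdings_eventually_labelled:
  assumes hold: "\<forall>j\<in>I. \<forall>b\<in>Os. p j b > 0 \<longrightarrow> b \<in> C j"
    and j: "j \<in> I" and ob: "ob \<in> C j" "ob \<in> lab_objects I Os (dich_pref C) p T0 k"
    and b: "b \<in> Os" "p j b > 0"
  shows "\<exists>k'. b \<in> lab_objects_upto I Os (dich_pref C) p T0 k'"
proof (cases "j \<in> lab_agents_upto I Os (dich_pref C) p T0 k \<or> b \<in> lab_objects_upto I Os (dich_pref C) p T0 k")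
  case True
  then show ?thesis using dich_lab_holdings_labelled[OF hold _ b] by blast
next
  case False
  have "b \<in> C j" using hold j b by blast
  then have "b \<in> lab_candidates I Os (dich_pref C) p T0 k j"
    using False b ob by (auto simp: lab_candidates_def indiff_dich_pref)
  then have "b \<in> lab_objects_upto I Os (dich_pref C) p T0 (Suc k)"
    using False j by (auto simp: lab_Suc)
  then show ?thesis by blast
qed

lemma dich_Obar_holdings_closed:
  assumes hold: "\<forall>j\<in>I. \<forall>b\<in>Os. p j b > 0 \<longrightarrow> b \<in> C j"
    and j: "j \<in> I" and ob: "ob \<in> C j" "ob \<in> Obar I Os (dich_pref C) w p"
    and b: "b \<in> Os" "p j b > 0"
  shows "b \<in> Obar I Os (dich_pref C) w p"
proof -
  obtain k where "ob \<in> lab_objects I Os (dich_pref C) p (Ocur I Os w) k"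
    using Obar_lab_objects[OF ob(2)] by blast
  then obtain k' where "b \<in> lab_objects_upto I Os (dich_pref C) p (Ocur I Os w) k'"
    using dich_lab_holdings_eventually_labelled[OF hold j ob(1) _ b] by blast
  then show ?thesis using lab_objects_upto_Obar[of I Os "dich_pref C" p w k'] by blast
qed

definition fttc_invariant ::
    "'i set \<Rightarrow> 'o set \<Rightarrow> ('i \<Rightarrow> 'o set) \<Rightarrow> ('i \<Rightarrow> 'o \<Rightarrow> real) \<Rightarrow> ('i \<Rightarrow> 'o \<Rightarrow> real) \<Rightarrow> bool"
  where "fttc_invariant I Os C w p \<longleftrightarrow>
    (\<forall>i\<in>I. \<forall>b\<in>Os. 0 \<le> w i b \<and> 0 \<le> p i b \<and> (0 < p i b \<longrightarrow> b \<in> C i)) \<and>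
    (\<forall>i\<in>I. \<forall>j\<in>I. \<forall>b\<in>Os. w i b = w j b) \<and>
    (\<forall>i\<in>I. (\<Sum>b\<in>Os. w i b + p i b) = 1) \<and>
    (\<forall>b\<in>Os. (\<Sum>i\<in>I. w i b + p i b) = 1)"

lemma fttc_invariantD:
  assumes "fttc_invariant I Os C w p"
  shows "\<And>i b. i \<in> I \<Longrightarrow> b \<in> Os \<Longrightarrow> 0 \<le> w i b"
    and "\<And>i b. i \<in> I \<Longrightarrow> b \<in> Os \<Longrightarrow> 0 \<le> p i b"
    and "\<And>i b. i \<in> I \<Longrightarrow> b \<in> Os \<Longrightarrow> 0 < p i b \<Longrightarrow> b \<in> C i"
    and "\<And>i j b. i \<in> I \<Longrightarrow> j \<in> I \<Longrightarrow> b \<in> Os \<Longrightarrow> w i b = w j b"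
    and "\<And>i. i \<in> I \<Longrightarrow> (\<Sum>b\<in>Os. w i b + p i b) = 1"
    and "\<And>b. b \<in> Os \<Longrightarrow> (\<Sum>i\<in>I. w i b + p i b) = 1"
  using assms unfolding fttc_invariant_def by blast+

lemma fttc_invariant_endowment_zero:
  assumes "finite I" "fttc_invariant I Os C w p" "b \<in> Os - Ocur I Os w" "i \<in> I"
  shows "w i b = 0"
proof -
  have nonneg: "\<forall>j\<in>I. 0 \<le> w j b" using fttc_invariantD(1)[OF assms(2)] assms(3) by blast
  have "\<not> 0 < (\<Sum>j\<in>I. w j b)" using assms(3) by (simp add: Ocur_def)
  moreover have "0 \<le> (\<Sum>j\<in>I. w j b)" using nonneg by (simp add: sum_nonneg)
  ultimately have "(\<Sum>j\<in>I. w j b) = 0" by linarith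
  then show ?thesis using nonneg assms(4) by (simp add: sum_nonneg_eq_0_iff[OF assms(1)])
qed

lemma fttc_invariant_endowment_pos:
  assumes "finite Os" "fttc_invariant I Os C w p" "Ocur I Os w \<noteq> {}" "i \<in> I"
  shows "0 < (\<Sum>b\<in>Os. w i b)"
proof -
  obtain b0 where b0: "b0 \<in> Os" "0 < (\<Sum>j\<in>I. w j b0)" using assms(3) by (auto simp: Ocur_def)
  then obtain j where "j \<in> I" "0 < w j b0" using sum_nonpos[of I "\<lambda>j. w j b0"] by (meson not_le)
  then have "0 < w i b0" using fttc_invariantD(4)[OF assms(2) assms(4) _ b0(1)] by simp
  also have "w i b0 \<le> (\<Sum>b\<in>Os. w i b)"
    using assms(1,4) b0(1) fttc_invariantD(1)[OF assms(2)] by (intro member_le_sum) auto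
  finally show ?thesis .
qed

lemma fttc_invariant_Iact:
  assumes "finite Os" "fttc_invariant I Os C w p" "Ocur I Os w \<noteq> {}"
  shows "Iact I Os R w p = I"
  using Lall_subset[of I Os R w p] fttc_invariant_endowment_pos[OF assms] by (auto simp: Iact_def)

text \<open>Objects outside \<open>Obar\<close> have no endowment left, and by \<open>dich_Obar_holdings_closed\<close> they are held
  only by agents none of whose acceptable objects lies in \<open>Obar\<close>. Each such agent still owns a positive
  endowment, so these agents jointly hold fewer than their number of units outside \<open>Obar\<close>.\<close>

lemma card_outside_Obar_lt:
  assumes fin: "finite I" "finite Os"
    and inv: "fttc_invariant I Os C w p" and trading: "Ocur I Os w \<noteq> {}"
    and J_def: "J = {j \<in> I. C j \<inter> Obar I Os (dich_pref C) w p = {}}" and "J \<noteq> {}"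
  shows "card (Os - Obar I Os (dich_pref C) w p) < card J"
proof -
  define U where "U = Os - Obar I Os (dich_pref C) w p"
  obtain i where "i \<in> J" using \<open>J \<noteq> {}\<close> by blast
  have JI: "J \<subseteq> I" and finJ: "finite J" using J_def fin(1) by auto
  have hold: "\<forall>j\<in>I. \<forall>b\<in>Os. 0 < p j b \<longrightarrow> b \<in> C j" using fttc_invariantD(3)[OF inv] by blast
  define s where "s = (\<Sum>b\<in>Os. w i b)"
  have "0 < s" unfolding s_def using fttc_invariant_endowment_pos[OF fin(2) inv trading] \<open>i \<in> J\<close> JI by blast
  have holdings: "(\<Sum>b\<in>Os. p j b) = 1 - s" if "j \<in> J" for j
  proof -
    have "(\<Sum>b\<in>Os. w j b) = s"
      unfolding s_def using fttc_invariantD(4)[OF inv] that \<open>i \<in> J\<close> JI by (intro sum.cong) auto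
    moreover have "(\<Sum>b\<in>Os. w j b) + (\<Sum>b\<in>Os. p j b) = 1"
      using fttc_invariantD(5)[OF inv, of j] that JI by (simp add: sum.distrib subset_iff)
    ultimately show ?thesis by linarith
  qed
  have column: "(\<Sum>j\<in>J. p j b) = 1" if b: "b \<in> U" for b
  proof -
    have bO: "b \<in> Os - Ocur I Os w" using b by (auto simp: U_def Obar_def)
    have "(\<Sum>j\<in>J. p j b) = (\<Sum>j\<in>I. p j b)"
    proof (rule sum.mono_neutral_left[OF fin(1) JI], intro ballI)
      fix j assume j: "j \<in> I - J"
      then obtain ob where ob: "ob \<in> C j" "ob \<in> Obar I Os (dich_pref C) w p" by (auto simp: J_def)
      have "\<not> 0 < p j b"
        using dich_Obar_holdings_closed[OF hold _ ob, of b] j b by (auto simp: U_def)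
      then show "p j b = 0" using fttc_invariantD(2)[OF inv, of j b] j bO by force
    qed
    also have "\<dots> = (\<Sum>j\<in>I. w j b + p j b)"
      using fttc_invariant_endowment_zero[OF fin(1) inv bO] by (intro sum.cong) auto
    finally show ?thesis using fttc_invariantD(6)[OF inv] bO by simp
  qed
  have "real (card U) = (\<Sum>b\<in>U. \<Sum>j\<in>J. p j b)" using column by simp
  also have "\<dots> = (\<Sum>j\<in>J. \<Sum>b\<in>U. p j b)" by (rule sum.swap)
  also have "\<dots> \<le> (\<Sum>j\<in>J. \<Sum>b\<in>Os. p j b)"
    using fttc_invariantD(2)[OF inv] JI fin(2) by (intro sum_mono sum_mono2) (auto simp: U_def)
  also have "\<dots> = real (card J) * (1 - s)" using holdings by simp
  also have "\<dots> < real (card J)" using \<open>0 < s\<close> finJ \<open>J \<noteq> {}\<close> by (simp add: card_gt_0_iff)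
  finally show ?thesis unfolding U_def by linarith
qed

locale strict_hall_market =
  fixes I :: "'i set" and Os :: "'o set" and C :: "'i \<Rightarrow> 'o set"
  assumes finite_agents: "finite I" and finite_objects: "finite Os"
    and card_objects: "card Os = card I"
    and acceptable_subset: "\<forall>i\<in>I. C i \<subseteq> Os"
    and all_demanded: "Gam C I Os = Os"
    and strict_hall: "\<forall>Os'. Os' \<noteq> {} \<and> Os' \<subset> Os \<longrightarrow> card Os' < card {i \<in> I. C i \<inter> Os' \<noteq> {}}"
begin

lemma strict_hall_complement:
  assumes "Y \<subseteq> I" and "Os' \<noteq> {}" and "Os' \<subset> Os" and "\<forall>i\<in>Y. C i \<inter> Os' = {}"
  shows "card Os' + card Y < card I"
proof -
  have "card Os' < card {i \<in> I. C i \<inter> Os' \<noteq> {}}" using strict_hall assms(2,3) by blast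
  also have "\<dots> \<le> card (I - Y)" using assms(4) finite_agents by (intro card_mono) auto
  also have "\<dots> = card I - card Y" using assms(1) finite_agents by (simp add: card_Diff_subset finite_subset)
  finally show ?thesis by linarith
qed

lemma acceptable_nonempty:
  assumes "i \<in> I" shows "C i \<noteq> {}"
proof (cases "card I = 1")
  case True
  then obtain x where "I = {x}" by (rule card_1_singletonE)
  then have "C i = Os" using all_demanded acceptable_subset assms by (auto simp: Gam_def)
  then show ?thesis using True card_objects by auto
next
  case False
  have "card I \<noteq> 0" using assms finite_agents by auto
  with False have two: "2 \<le> card Os" using card_objects by linarith
  then obtain ob where ob: "ob \<in> Os" by fastforce
  then have "card (Os - {ob}) = card Os - 1" using finite_objects by simp
  then have "Os - {ob} \<noteq> {}" using two by (intro notI) simp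
  show ?thesis
  proof
    assume "C i = {}"
    then have "card (Os - {ob}) + card {i} < card I"
      using assms ob \<open>Os - {ob} \<noteq> {}\<close> by (intro strict_hall_complement) auto
    then show False using ob finite_objects card_objects by simp
  qed
qed

lemma card_le_card_Gam:
  assumes Y: "Y \<subseteq> I" "Y \<noteq> {}"
  shows "card Y \<le> card (Gam C Y Os)"
proof (cases "Gam C Y Os = Os")
  case True
  then show ?thesis using card_mono[OF finite_agents Y(1)] card_objects by simp
next
  case False
  have "Gam C Y Os \<subseteq> Os" by (auto simp: Gam_def)
  moreover have "Gam C Y Os \<noteq> {}"
    using Y acceptable_nonempty acceptable_subset by (fastforce simp: Gam_def)
  ultimately have "card (Os - Gam C Y Os) + card Y < card I"
    using False Y(1) by (intro strict_hall_complement) (auto simp: Gam_def)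
  moreover have "card (Os - Gam C Y Os) = card Os - card (Gam C Y Os)"
    using \<open>Gam C Y Os \<subseteq> Os\<close> finite_objects by (simp add: card_Diff_subset finite_subset)
  moreover have "card (Gam C Y Os) \<le> card Os"
    using \<open>Gam C Y Os \<subseteq> Os\<close> finite_objects by (rule card_mono[rotated])
  ultimately show ?thesis using card_objects by linarith
qed

lemma ratio_all_agents: "I \<noteq> {} \<Longrightarrow> ratio C I Os = 1"
  using all_demanded card_objects finite_agents by (simp add: ratio_def)

lemma is_bneck_all_agents_iff:
  assumes "I \<noteq> {}" shows "is_bneck C I Os X \<longleftrightarrow> X = I"
proof -
  have ratio_ge: "ratio C I Os \<le> ratio C Y Os" if "Y \<subseteq> I" "Y \<noteq> {}" for Y
  proof -
    have "0 < card Y" using that finite_agents by (simp add: card_gt_0_iff finite_subset)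
    then have "1 \<le> ratio C Y Os" using card_le_card_Gam[OF that] by (simp add: ratio_def le_divide_eq)
    then show ?thesis using ratio_all_agents[OF assms] by simp
  qed
  show ?thesis
  proof
    assume X: "is_bneck C I Os X"
    then have XI: "X \<subseteq> I" "X \<noteq> {}" and min: "ratio C X Os \<le> ratio C I Os"
      and largest: "\<forall>Y. Y \<subseteq> I \<and> Y \<noteq> {} \<and> ratio C Y Os = ratio C X Os \<longrightarrow> card Y \<le> card X"
      using assms unfolding is_bneck_def by blast+
    have "ratio C I Os = ratio C X Os" using min ratio_ge[OF XI] by linarith
    then have "card I \<le> card X" using largest assms by blast
    then show "X = I" using card_seteq[OF finite_agents XI(1)] by blast
  next
    assume "X = I"
    then show "is_bneck C I Os X"
      using assms ratio_ge card_mono[OF finite_agents] unfolding is_bneck_def by blast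
  qed
qed

lemma bottleneck_sequence_trivial:
  assumes "I \<noteq> {}" shows "bm C I Os = 1" and "bX C I Os 1 = I"
proof -
  have the_bneck: "(THE X. is_bneck C I Os X) = I" using is_bneck_all_agents_iff[OF assms] by simp
  then show "bX C I Os 1 = I" by (simp add: bX_def)
  show "bm C I Os = 1"
    unfolding bm_def
  proof (rule Least_equality)
    show "fst (bseq C I Os 1) = {}" using the_bneck by (simp add: Let_def)
  next
    fix m assume "fst (bseq C I Os m) = {}"
    then show "1 \<le> m" using assms by (cases m) auto
  qed
qed

lemma acceptable_in_Obar:
  assumes inv: "fttc_invariant I Os C w p" and trading: "Ocur I Os w \<noteq> {}" and i: "i \<in> I"
  shows "Obar I Os (dich_pref C) w p \<inter> C i \<noteq> {}"
proof
  assume none: "Obar I Os (dich_pref C) w p \<inter> C i = {}"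
  define Ob where "Ob = Obar I Os (dich_pref C) w p"
  define J where "J = {j \<in> I. C j \<inter> Ob = {}}"
  have "J \<noteq> {}" using none i by (auto simp: J_def Ob_def)
  then have "card (Os - Ob) < card J"
    unfolding Ob_def by (rule card_outside_Obar_lt[OF finite_agents finite_objects inv trading J_def[unfolded Ob_def]])
  moreover have "Ob \<subseteq> Os" by (simp add: Ob_def Obar_subset)
  then have "card (Os - Ob) = card Os - card Ob" and "card Ob \<le> card Os"
    using finite_objects by (simp_all add: card_Diff_subset card_mono finite_subset[of Ob Os])
  moreover have "card Ob + card J < card I"
  proof (rule strict_hall_complement)
    show "Ob \<noteq> {}" using trading unfolding Ob_def Obar_def by blast
    obtain x where "x \<in> C i" using acceptable_nonempty[OF i] by blast
    then show "Ob \<subset> Os" using \<open>Ob \<subseteq> Os\<close> none acceptable_subset i unfolding Ob_def by blast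
  qed (auto simp: J_def)
  ultimately show False using card_objects by linarith
qed

end

text \<open>One trading step in which every agent is active. Only feasibility of the flow \<open>(xi, xo)\<close> is
  assumed.\<close>

locale fttc_trade =
  fixes I :: "'i set" and Os :: "'o set" and C :: "'i \<Rightarrow> 'o set"
    and w p lam gam w' p' :: "'i \<Rightarrow> 'o \<Rightarrow> real" and xi :: "'i \<Rightarrow> real" and xo :: "'o \<Rightarrow> real"
  assumes finite_agents: "finite I" and finite_objects: "finite Os"
    and inv: "fttc_invariant I Os C w p"
    and acceptable_visible: "\<And>i. i \<in> I \<Longrightarrow> Obar I Os (dich_pref C) w p \<inter> C i \<noteq> {}"
    and lam_nonneg: "\<And>i b. i \<in> I \<Longrightarrow> b \<in> Obar I Os (dich_pref C) w p \<Longrightarrow> 0 \<le> lam i b"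
    and lam_sum: "\<And>b. b \<in> Obar I Os (dich_pref C) w p \<Longrightarrow> (\<Sum>i\<in>I. lam i b) = 1"
    and lam_tilde: "\<And>i b. i \<in> I \<Longrightarrow> b \<in> Otil I Os (dich_pref C) w p \<Longrightarrow> 0 < lam i b \<Longrightarrow>
      b \<in> Otil_i I Os (dich_pref C) w p i"
    and lam_uniform: "\<And>i j b. i \<in> I \<Longrightarrow> j \<in> I \<Longrightarrow> b \<in> Ocur I Os w \<Longrightarrow> lam i b = lam j b"
    and gam_nonneg: "\<And>i b. i \<in> I \<Longrightarrow> b \<in> Obar I Os (dich_pref C) w p \<Longrightarrow> 0 \<le> gam i b"
    and gam_sum: "\<And>i. i \<in> I \<Longrightarrow> (\<Sum>b\<in>Obar I Os (dich_pref C) w p. gam i b) = 1"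
    and gam_pointing: "\<And>i b. i \<in> I \<Longrightarrow> b \<in> Obar I Os (dich_pref C) w p \<Longrightarrow> 0 < gam i b \<Longrightarrow>
      b \<in> Aset I Os (dich_pref C) w p i"
    and xi_nonneg: "\<And>i. i \<in> I \<Longrightarrow> 0 \<le> xi i"
    and xo_nonneg: "\<And>b. b \<in> Obar I Os (dich_pref C) w p \<Longrightarrow> 0 \<le> xo b"
    and xo_eq: "\<And>b. b \<in> Obar I Os (dich_pref C) w p \<Longrightarrow> xo b = (\<Sum>i\<in>I. gam i b * xi i)"
    and xi_eq: "\<And>i. i \<in> I \<Longrightarrow> xi i = (\<Sum>b\<in>Obar I Os (dich_pref C) w p. lam i b * xo b)"
    and endowment_cap: "\<And>i b. i \<in> I \<Longrightarrow> b \<in> Ocur I Os w \<Longrightarrow> lam i b * xo b \<le> w i b"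
    and holding_cap: "\<And>i b. i \<in> I \<Longrightarrow> b \<in> Otil I Os (dich_pref C) w p \<Longrightarrow> lam i b * xo b \<le> p i b"
    and w'_eq: "\<And>i b. i \<in> I \<Longrightarrow> b \<in> Os \<Longrightarrow>
      w' i b = (if b \<in> Ocur I Os w then w i b - lam i b * xo b else 0)"
    and p'_eq: "\<And>i b. i \<in> I \<Longrightarrow> b \<in> Os \<Longrightarrow>
      p' i b = p i b - (if b \<in> Otil_i I Os (dich_pref C) w p i then lam i b * xo b else 0)
                     + (if b \<in> Obar I Os (dich_pref C) w p then gam i b * xi i else 0)"
begin

abbreviation "O_cur \<equiv> Ocur I Os w"
abbreviation "O_til \<equiv> Otil I Os (dich_pref C) w p"
abbreviation "O_bar \<equiv> Obar I Os (dich_pref C) w p"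
abbreviation "O_til_i \<equiv> Otil_i I Os (dich_pref C) w p"

lemma O_bar_eq: "O_bar = O_cur \<union> O_til"
  by (simp add: Obar_def)

lemma O_til_i_subset_O_til: "O_til_i i \<subseteq> O_til" and O_til_O_cur_disjoint: "O_til \<inter> O_cur = {}"
  by (simp_all add: Otil_i_subset Otil_Ocur_disjoint)

text \<open>Only the shares \<open>lam i b * xo b\<close> of objects \<open>b \<in> O_bar\<close> leave agent \<open>i\<close>: from its endowment if
  \<open>b\<close> is current, from its holdings if \<open>b \<in> O_til_i i\<close>; for other \<open>b \<in> O_til\<close> the share is zero.\<close>

lemma trade_balance:
  assumes i: "i \<in> I" and b: "b \<in> Os"
  shows "w' i b + p' i b = w i b + p i b - (if b \<in> O_bar then lam i b * xo b else 0)
                                         + (if b \<in> O_bar then gam i b * xi i else 0)"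
proof (cases "b \<in> O_cur")
  case True
  then have "b \<notin> O_til_i i" using O_til_i_subset_O_til O_til_O_cur_disjoint by blast
  then show ?thesis using True w'_eq[OF i b] p'_eq[OF i b] by (simp add: O_bar_eq)
next
  case False
  then have w0: "w i b = 0" using fttc_invariant_endowment_zero[OF finite_agents inv _ i] b by blast
  have "lam i b * xo b = 0" if "b \<in> O_bar" "b \<notin> O_til_i i"
    using that False lam_nonneg[OF i] lam_tilde[OF i] by (force simp: O_bar_eq)
  then show ?thesis using False w0 w'_eq[OF i b] p'_eq[OF i b] O_til_i_subset_O_til
    by (auto simp: O_bar_eq)
qed

text \<open>Under dichotomous preferences every object some agent points at is \<open>\<succeq>\<close>-maximal in \<open>O_bar\<close>,
  hence acceptable, because \<open>O_bar\<close> contains an acceptable object for every agent.\<close>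

lemma pointing_acceptable:
  assumes i: "i \<in> I" and b: "b \<in> O_bar" and "0 < gam i b"
  shows "b \<in> C i"
proof -
  have "\<forall>b'\<in>O_bar. dich_pref C i b b'"
    using gam_pointing[OF i b \<open>0 < gam i b\<close>] by (simp add: Aset_def Bset_def)
  moreover obtain b' where "b' \<in> O_bar" "b' \<in> C i" using acceptable_visible[OF i] by blast
  ultimately show ?thesis by (auto simp: dich_pref_def)
qed

lemma p'_acceptable:
  assumes i: "i \<in> I" and b: "b \<in> Os" and pos: "0 < p' i b"
  shows "b \<in> C i"
proof (cases "0 < p i b")
  case True
  then show ?thesis using fttc_invariantD(3)[OF inv i b] by blast
next
  case False
  then have "p i b = 0" using fttc_invariantD(2)[OF inv i b] by simp
  moreover have "0 \<le> (if b \<in> O_til_i i then lam i b * xo b else 0)"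
    using lam_nonneg[OF i] xo_nonneg O_til_i_subset_O_til by (auto simp: O_bar_eq intro!: mult_nonneg_nonneg)
  ultimately have "0 < (if b \<in> O_bar then gam i b * xi i else 0)"
    using pos p'_eq[OF i b] by linarith
  then have "b \<in> O_bar" and "0 < gam i b"
    using xi_nonneg[OF i] by (auto split: if_splits simp: zero_less_mult_iff)
  then show ?thesis by (rule pointing_acceptable[OF i])
qed

lemma w'_nonneg: "i \<in> I \<Longrightarrow> b \<in> Os \<Longrightarrow> 0 \<le> w' i b"
  using w'_eq endowment_cap by force

lemma p'_nonneg:
  assumes i: "i \<in> I" and b: "b \<in> Os"
  shows "0 \<le> p' i b"
proof -
  have "0 \<le> p i b - (if b \<in> O_til_i i then lam i b * xo b else 0)"
    using holding_cap[OF i] fttc_invariantD(2)[OF inv i b] O_til_i_subset_O_til by auto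
  moreover have "0 \<le> (if b \<in> O_bar then gam i b * xi i else 0)"
    using gam_nonneg[OF i] xi_nonneg[OF i] by simp
  ultimately show ?thesis using p'_eq[OF i b] by linarith
qed

lemma w'_uniform:
  assumes i: "i \<in> I" and j: "j \<in> I" and b: "b \<in> Os"
  shows "w' i b = w' j b"
  using w'_eq[OF i b] w'_eq[OF j b] lam_uniform[OF i j] fttc_invariantD(4)[OF inv i j b] by simp

lemma agent_total:
  assumes i: "i \<in> I"
  shows "(\<Sum>b\<in>Os. w' i b + p' i b) = 1"
proof -
  have sub: "O_bar \<subseteq> Os" by (rule Obar_subset)
  have "(\<Sum>b\<in>Os. w' i b + p' i b) =
      (\<Sum>b\<in>Os. w i b + p i b) - (\<Sum>b\<in>O_bar. lam i b * xo b) + (\<Sum>b\<in>O_bar. gam i b * xi i)"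
    using trade_balance[OF i] finite_objects sub
    by (simp add: sum.distrib sum_subtractf sum.inter_restrict[symmetric] Int_absorb1)
  also have "\<dots> = 1 - xi i + xi i * (\<Sum>b\<in>O_bar. gam i b)"
    using fttc_invariantD(5)[OF inv i] xi_eq[OF i, symmetric] by (simp add: sum_distrib_left mult.commute)
  also have "\<dots> = 1" using gam_sum[OF i] by simp
  finally show ?thesis .
qed

lemma object_total:
  assumes b: "b \<in> Os"
  shows "(\<Sum>i\<in>I. w' i b + p' i b) = 1"
proof -
  have "(\<Sum>i\<in>I. w' i b + p' i b) = (\<Sum>i\<in>I. w i b + p i b)
      - (if b \<in> O_bar then (\<Sum>i\<in>I. lam i b) * xo b else 0) + (if b \<in> O_bar then xo b else 0)"
    using trade_balance[OF _ b] xo_eq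
    by (simp add: sum.distrib sum_subtractf sum_distrib_right)
  then show ?thesis using lam_sum fttc_invariantD(6)[OF inv b] by simp
qed

lemma fttc_invariant_after: "fttc_invariant I Os C w' p'"
  unfolding fttc_invariant_def
  using w'_nonneg p'_nonneg p'_acceptable w'_uniform agent_total object_total by blast

end

lemma fttc_step_trade:
  assumes fin: "finite I" "finite Os" and inv: "fttc_invariant I Os C w p"
    and visible: "\<And>i. i \<in> I \<Longrightarrow> Obar I Os (dich_pref C) w p \<inter> C i \<noteq> {}"
    and step: "fttc_step I Os (dich_pref C) w p lam beta gam w' p'"
    and eeet: "\<forall>i\<in>Iact I Os (dich_pref C) w p. \<forall>j\<in>Iact I Os (dich_pref C) w p.
      (\<forall>b\<in>Os. w i b = w j b) \<longrightarrow> (\<forall>b\<in>Ocur I Os w. lam i b = lam j b)"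
  shows "\<exists>xi xo. fttc_trade I Os C w p lam gam w' p' xi xo"
proof -
  have "Ocur I Os w \<noteq> {}" using step by (simp add: fttc_step_def Let_def)
  then have active: "Iact I Os (dich_pref C) w p = I" by (rule fttc_invariant_Iact[OF fin(2) inv])
  have uniform: "\<forall>i\<in>I. \<forall>j\<in>I. \<forall>b\<in>Ocur I Os w. lam i b = lam j b"
    using eeet fttc_invariantD(4)[OF inv] unfolding active by blast
  note step' = step[unfolded fttc_step_def Let_def active]
  from step' obtain xi xo where sol: "fttc_sol I Os (dich_pref C) w p lam beta gam xi xo"
    and w'_upd: "\<forall>i\<in>I. \<forall>b\<in>Os. w' i b = (if b \<in> Ocur I Os w then w i b - lam i b * xo b else 0)"
    and p'_upd: "\<forall>i\<in>I. \<forall>b\<in>Os. p' i b = p i b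
      - (if b \<in> Otil_i I Os (dich_pref C) w p i then lam i b * xo b else 0)
      + (if b \<in> Obar I Os (dich_pref C) w p then gam i b * xi i else 0)"
    by (auto simp: fttc_maxsol_def)
  have lam: "\<forall>i\<in>I. \<forall>b\<in>Obar I Os (dich_pref C) w p. 0 \<le> lam i b"
      "\<forall>b\<in>Obar I Os (dich_pref C) w p. (\<Sum>i\<in>I. lam i b) = 1"
      "\<forall>i\<in>I. \<forall>b\<in>Otil I Os (dich_pref C) w p. 0 < lam i b \<longrightarrow> b \<in> Otil_i I Os (dich_pref C) w p i"
    and beta: "\<forall>i\<in>I. \<forall>b\<in>Ocur I Os w. beta i b \<le> w i b"
    and gam: "\<forall>i\<in>I. (\<forall>b\<in>Obar I Os (dich_pref C) w p. 0 \<le> gam i b) \<and>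
      (\<Sum>b\<in>Obar I Os (dich_pref C) w p. gam i b) = 1 \<and>
      (\<forall>b\<in>Obar I Os (dich_pref C) w p. 0 < gam i b \<longrightarrow> b \<in> Aset I Os (dich_pref C) w p i)"
    using step' by blast+
  have flow: "\<forall>i\<in>I. 0 \<le> xi i" "\<forall>b\<in>Obar I Os (dich_pref C) w p. 0 \<le> xo b"
      "\<forall>i\<in>I. \<forall>b\<in>Ocur I Os w. lam i b * xo b \<le> beta i b"
      "\<forall>i\<in>I. \<forall>b\<in>Otil I Os (dich_pref C) w p. lam i b * xo b \<le> p i b"
    and xo_eq: "\<forall>b\<in>Obar I Os (dich_pref C) w p. xo b = (\<Sum>i\<in>I. gam i b * xi i)"
    and xi_eq: "\<forall>i\<in>I. xi i = (\<Sum>b\<in>Obar I Os (dich_pref C) w p. lam i b * xo b)"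
    using sol unfolding fttc_sol_def Let_def active by blast+
  have "fttc_trade I Os C w p lam gam w' p' xi xo"
  proof (unfold_locales)
    fix i b assume "i \<in> I" "b \<in> Ocur I Os w"
    then show "lam i b * xo b \<le> w i b" using beta flow(3) by fastforce
  next
    show "\<And>i j b. i \<in> I \<Longrightarrow> j \<in> I \<Longrightarrow> b \<in> Ocur I Os w \<Longrightarrow> lam i b = lam j b"
      using uniform by blast
    show "\<And>b. b \<in> Obar I Os (dich_pref C) w p \<Longrightarrow> xo b = (\<Sum>i\<in>I. gam i b * xi i)"
      by (simp add: xo_eq)
    show "\<And>i. i \<in> I \<Longrightarrow> xi i = (\<Sum>b\<in>Obar I Os (dich_pref C) w p. lam i b * xo b)"
      by (simp add: xi_eq)
  qed (simp_all add: fin inv visible lam gam flow w'_upd p'_upd)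
  then show ?thesis by blast
qed

context strict_hall_market
begin

lemma fttc_invariant_initial:
  assumes init: "\<forall>i\<in>I. \<forall>b\<in>Os. w i b = 1 / real (card I) \<and> p i b = 0"
  shows "fttc_invariant I Os C w p"
proof -
  have "\<forall>i\<in>I. (\<Sum>b\<in>Os. w i b + p i b) = 1"
  proof
    fix i assume i: "i \<in> I"
    then have "card I \<noteq> 0" using finite_agents by auto
    have "(\<Sum>b\<in>Os. w i b + p i b) = (\<Sum>b\<in>Os. 1 / real (card I))" using init i by (intro sum.cong) auto
    also have "\<dots> = 1" using card_objects \<open>card I \<noteq> 0\<close> by simp
    finally show "(\<Sum>b\<in>Os. w i b + p i b) = 1" .
  qed
  moreover have "\<forall>b\<in>Os. (\<Sum>i\<in>I. w i b + p i b) = 1"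
  proof
    fix b assume b: "b \<in> Os"
    then have "card I \<noteq> 0" using finite_objects card_objects[symmetric] by auto
    have "(\<Sum>i\<in>I. w i b + p i b) = (\<Sum>i\<in>I. 1 / real (card I))" using init b by (intro sum.cong) auto
    also have "\<dots> = 1" using \<open>card I \<noteq> 0\<close> by simp
    finally show "(\<Sum>i\<in>I. w i b + p i b) = 1" .
  qed
  moreover have "\<forall>i\<in>I. \<forall>b\<in>Os. 0 \<le> w i b \<and> 0 \<le> p i b \<and> (0 < p i b \<longrightarrow> b \<in> C i)"
    and "\<forall>i\<in>I. \<forall>j\<in>I. \<forall>b\<in>Os. w i b = w j b"
    using init by simp_all
  ultimately show ?thesis unfolding fttc_invariant_def by blast
qed

lemma fttc_run_invariant:
  fixes D d :: nat
  assumes run: "fttc_run I Os (dich_pref C) (\<lambda>i b. 1 / real (card I)) D ws ps lams betas gams"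
    and eeet: "stepwise_EEET I Os (dich_pref C) D ws ps lams"
  shows "d \<le> D \<Longrightarrow> fttc_invariant I Os C (ws d) (ps d)"
proof (induction d)
  case 0
  show ?case using run by (intro fttc_invariant_initial) (simp add: fttc_run_def)
next
  case (Suc d)
  then have inv: "fttc_invariant I Os C (ws d) (ps d)" by simp
  have d: "Suc d \<in> {1..D}" using Suc.prems by simp
  have step: "fttc_step I Os (dich_pref C) (ws d) (ps d) (lams (Suc d)) (betas (Suc d)) (gams (Suc d))
      (ws (Suc d)) (ps (Suc d))"
    using bspec[OF run[unfolded fttc_run_def, THEN conjunct2, THEN conjunct1] d] unfolding diff_Suc_1 .
  then have "Ocur I Os (ws d) \<noteq> {}" by (simp add: fttc_step_def Let_def)
  then have visible: "\<And>i. i \<in> I \<Longrightarrow> Obar I Os (dich_pref C) (ws d) (ps d) \<inter> C i \<noteq> {}"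
    using acceptable_in_Obar[OF inv] by blast
  have eeet_d: "\<forall>i\<in>Iact I Os (dich_pref C) (ws d) (ps d). \<forall>j\<in>Iact I Os (dich_pref C) (ws d) (ps d).
      (\<forall>b\<in>Os. ws d i b = ws d j b) \<longrightarrow> (\<forall>b\<in>Ocur I Os (ws d). lams (Suc d) i b = lams (Suc d) j b)"
    using bspec[OF eeet[unfolded stepwise_EEET_def] d] unfolding diff_Suc_1 .
  obtain xi xo
    where "fttc_trade I Os C (ws d) (ps d) (lams (Suc d)) (gams (Suc d)) (ws (Suc d)) (ps (Suc d)) xi xo"
    using fttc_step_trade[OF finite_agents finite_objects inv visible step eeet_d] by blast
  then show ?case by (rule fttc_trade.fttc_invariant_after)
qed

lemma fttc_run_acceptable_total:
  fixes D :: nat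
  assumes run: "fttc_run I Os (dich_pref C) (\<lambda>i b. 1 / real (card I)) D ws ps lams betas gams"
    and eeet: "stepwise_EEET I Os (dich_pref C) D ws ps lams" and i: "i \<in> I"
  shows "(\<Sum>b\<in>C i. ps D i b) = 1"
proof -
  have inv: "fttc_invariant I Os C (ws D) (ps D)" by (rule fttc_run_invariant[OF run eeet order_refl])
  have "ws D i b = 0" if "b \<in> Os" for b
    using fttc_invariant_endowment_zero[OF finite_agents inv _ i] that run by (simp add: fttc_run_def)
  then have "(\<Sum>b\<in>Os. ps D i b) = 1" using fttc_invariantD(5)[OF inv i] by simp
  moreover have "(\<Sum>b\<in>C i. ps D i b) = (\<Sum>b\<in>Os. ps D i b)"
  proof (rule sum.mono_neutral_left[OF finite_objects])
    show "C i \<subseteq> Os" using acceptable_subset i by blast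
    show "\<forall>b\<in>Os - C i. ps D i b = 0"
    proof
      fix b assume "b \<in> Os - C i"
      then show "ps D i b = 0" using fttc_invariantD(2,3)[OF inv i, of b] by force
    qed
  qed
  ultimately show ?thesis by simp
qed

end

theorem mainTheorem7:
  fixes I :: "'i set" and Os :: "'o set" and C :: "'i \<Rightarrow> 'o set"
    and D :: nat and ws ps lams betas gams :: "nat \<Rightarrow> 'i \<Rightarrow> 'o \<Rightarrow> real"
  assumes "finite I" and "finite Os" and "card Os = card I"
    and "\<forall>i\<in>I. C i \<subseteq> Os"
    and "Gam C I Os = Os"
    and "\<forall>Os'. Os' \<noteq> {} \<and> Os' \<subset> Os \<longrightarrow> card Os' < card {i \<in> I. C i \<inter> Os' \<noteq> {}}"
    and "fttc_run I Os (dich_pref C) (\<lambda>i b. 1 / real (card I)) D ws ps lams betas gams"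
    and "stepwise_EEET I Os (dich_pref C) D ws ps lams"
  shows "\<forall>k\<in>{1..bm C I Os}. \<forall>i\<in>bX C I Os k.
           (\<Sum>b\<in>C i. ps D i b) = ratio C (bX C I Os k) (snd (bseq C I Os (k-1)))"
proof (cases "I = {}")
  case True
  then have "bm C I Os = 0" by (simp add: bm_def)
  then show ?thesis by simp
next
  case False
  interpret strict_hall_market I Os C using assms(1-6) by unfold_locales
  show ?thesis
    using bottleneck_sequence_trivial[OF False] ratio_all_agents[OF False]
      fttc_run_acceptable_total[OF assms(7,8)] by simp
qed

end
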